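(* The circle function $\varphi(M)=\overline{\det}(C_M)/|\overline{\det}(C_M)|$ satisfies: (i) if $M\in\mathcal{G}$ has Cartan decomposition $M=Tu$ with respect to $J$, then $\varphi(M)=\overline{\det}(u)$; in particular $\varphi(\mathbb{1})=1$. In the fermionic case, $\varphi$ is defined only for $M$ with $\det(\mathbb{1}+\Delta_M)\ne 0$. (ii) For $u_1,u_2\in\mathrm{U}(N)$: $\varphi(u_1Mu_2)=\varphi(u_1)\varphi(M)\varphi(u_2)$. (iii) $\varphi(M^{-1})=\varphi(M)^*$.
   Context: Bosonic case: $\mathcal{G}=\mathrm{Sp}(2N,\mathbb{R})$ (preserving $\Omega=\begin{pmatrix}0&\mathbb{1}\\-\mathbb{1}&0\end{pmatrix}$), $J$ a complex structure ($J^2=-\mathbb{1}$) with $J\Omega J^\intercal=\Omega$, $-J\Omega>0$. Fermionic case: $\mathcal{G}=\mathrm{SO}(2N,\mathbb{R})$, $J$ orthogonal with $J^2=-\mathbb{1}$. $\mathfrak{g}$ is the Lie algebra of $\mathcal{G}$, $\mathrm{U}(N)=\{u\in\mathcal{G}:uJ=Ju\}$, $\mathfrak{u}_\perp(N)=\{K\in\mathfrak{g}:KJ=-JK\}$, $\Delta_M=-MJM^{-1}J$, $C_M=\frac12(M-JMJ)$. A Cartan decomposition is $M=Tu$ with $T=e^{K_+}$, $K_+\in\mathfrak{u}_\perp(N)$, $u\in\mathrm{U}(N)$ (in the fermionic case with all eigenvalues of $K_+$ of modulus $<\pi/2$, which is possible and unique precisely when $\det(\mathbb{1}+\Delta_M)\ne0$).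 For $A$ commuting with $J$, $\overline{\det}(A)=\det(A_1+\mathrm{i}A_2)$ where $A=\begin{pmatrix}A_1&A_2\\-A_2&A_1\end{pmatrix}$ in a basis with $J=\begin{pmatrix}0&\mathbb{1}\\-\mathbb{1}&0\end{pmatrix}$. *)

theory Defs
  imports "HOL-Analysis.Analysis"
begin

text \<open>Phase space of dimension 2N is indexed by the type 'n + 'n (CARD('n) = N).
  The first copy ('Inl') and the second copy ('Inr') are the two blocks.\<close>

type_synonym 'n rmat = "real ^ ('n + 'n) ^ ('n + 'n)"

definition Omega :: "'n::finite rmat" where
  "Omega = (\<chi> a b. (case (a, b) of
      (Inl i, Inr j) \<Rightarrow> (if i = j then 1 else 0)
    | (Inr i, Inl j) \<Rightarrow> (if i = j then -1 else 0)
    | _ \<Rightarrow> 0))"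

definition J0 :: "'n::finite rmat" where
  "J0 = Omega"

text \<open>Group G: Sp(2N,R) (bosonic, bos = True) or SO(2N,R) (fermionic, bos = False).\<close>
definition in_G :: "bool \<Rightarrow> 'n::finite rmat \<Rightarrow> bool" where
  "in_G bos M = (if bos then M ** Omega ** transpose M = Omega
                 else transpose M ** M = mat 1 \<and> det M = 1)"

definition in_g :: "bool \<Rightarrow> 'n::finite rmat \<Rightarrow> bool" where
  "in_g bos K = (if bos then K ** Omega + Omega ** transpose K = 0
                 else transpose K = - K)"

definition pos_def :: "'n::finite rmat \<Rightarrow> bool" where
  "pos_def X = (transpose X = X \<and> (\<forall>x. x \<noteq> 0 \<longrightarrow> x \<bullet> (X *v x) > 0))"

definition cplx_str :: "bool \<Rightarrow> 'n::finite rmat \<Rightarrow> bool" where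
  "cplx_str bos J = (J ** J = - mat 1 \<and>
     (if bos then J ** Omega ** transpose J = Omega \<and> pos_def (- (J ** Omega))
      else transpose J ** J = mat 1))"

definition U_N :: "bool \<Rightarrow> 'n::finite rmat \<Rightarrow> 'n rmat set" where
  "U_N bos J = {u. in_G bos u \<and> u ** J = J ** u}"

definition u_perp :: "bool \<Rightarrow> 'n::finite rmat \<Rightarrow> 'n rmat set" where
  "u_perp bos J = {K. in_g bos K \<and> K ** J = - (J ** K)}"

definition Delta :: "'n::finite rmat \<Rightarrow> 'n rmat \<Rightarrow> 'n rmat" where
  "Delta J M = - (M ** J ** matrix_inv M ** J)"

definition C_of :: "'n::finite rmat \<Rightarrow> 'n rmat \<Rightarrow> 'n rmat" where
  "C_of J M = (1/2) *\<^sub>R (M - J ** M ** J)"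

fun mpow :: "'n::finite rmat \<Rightarrow> nat \<Rightarrow> 'n rmat" where
  "mpow K 0 = mat 1"
| "mpow K (Suc n) = K ** mpow K n"

definition mexp :: "'n::finite rmat \<Rightarrow> 'n rmat" where
  "mexp K = (\<Sum>n. (1 / fact n) *\<^sub>R mpow K n)"

definition cmat :: "'n::finite rmat \<Rightarrow> complex ^ ('n + 'n) ^ ('n + 'n)" where
  "cmat K = (\<chi> a b. complex_of_real (K $ a $ b))"

definition is_ceigenvalue :: "'n::finite rmat \<Rightarrow> complex \<Rightarrow> bool" where
  "is_ceigenvalue K l = (\<exists>v. v \<noteq> 0 \<and> cmat K *v v = l *s v)"

text \<open>detbar for A commuting with J0: A = [[A1,A2],[-A2,A1]], detbar A = det(A1 + i A2).\<close>
definition detbar_std :: "'n::finite rmat \<Rightarrow> complex" where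
  "detbar_std A = det (\<chi> i j. complex_of_real (A $ Inl i $ Inl j)
                              + \<i> * complex_of_real (A $ Inl i $ Inr j) :: complex ^ 'n ^ 'n)"

definition detbar :: "'n::finite rmat \<Rightarrow> 'n rmat \<Rightarrow> complex" where
  "detbar J A = (let S = (SOME S :: 'n rmat. invertible S \<and> S ** J ** matrix_inv S = J0)
                 in detbar_std (S ** A ** matrix_inv S))"

definition phi :: "'n::finite rmat \<Rightarrow> 'n rmat \<Rightarrow> complex" where
  "phi J M = detbar J (C_of J M) / complex_of_real (cmod (detbar J (C_of J M)))"

definition phi_defined :: "bool \<Rightarrow> 'n::finite rmat \<Rightarrow> 'n rmat \<Rightarrow> bool" where
  "phi_defined bos J M = (bos \<or> det (mat 1 + Delta J M) \<noteq> 0)"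

end

theory Submission
  imports Defs
begin

(* G = -Omega J (bosons) resp. G = 1 (fermions) is a J-invariant inner product.  In the basis
   J f_j, f_j of a G-unitary frame f, J becomes J0 and the G-adjoint becomes the transpose; hence
   detbar is multiplicative, is conjugated by the G-adjoint and has modulus 1 on U(N).  Since C_M
   commutes with J, C_(u1 M u2) = u1 C_M u2 and C_(M^-1) is the G-adjoint of C_M, this gives (ii)
   and (iii).  For (i), K_+^2 is G-self-adjoint and commutes with J, so a unitary frame of
   eigenvectors exists; on an eigenvector with eigenvalue mu the matrix C_T = cosh K_+ acts as
   cosh (sqrt mu) > 0 for bosons (mu >= 0) and as cos (sqrt (-mu)) for fermions (mu <= 0), which
   is positive because i sqrt (-mu) is an eigenvalue of K_+.  So detbar C_T > 0 and
   phi (T u) = detbar u. *)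

section \<open>Matrix algebra\<close>

lemma matrix_inv_right:
  fixes A :: "'a::field^'n^'n"
  assumes "invertible A"
  shows "A ** matrix_inv A = mat 1"
  using someI_ex[OF assms[unfolded invertible_def]] by (simp add: matrix_inv_def)

lemma matrix_inv_left:
  fixes A :: "'a::field^'n^'n"
  assumes "invertible A"
  shows "matrix_inv A ** A = mat 1"
  using someI_ex[OF assms[unfolded invertible_def]] by (simp add: matrix_inv_def)

lemma matrix_inv_unique:
  fixes A B :: "'a::field^'n^'n"
  assumes "A ** B = mat 1"
  shows "matrix_inv A = B"
proof -
  have inv: "invertible A"
    using assms invertible_right_inverse by blast
  have "matrix_inv A = matrix_inv A ** (A ** B)"
    using assms by simp
  also have "\<dots> = B"
    by (simp add: matrix_mul_assoc matrix_inv_left[OF inv])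
  finally show ?thesis .
qed

lemma invertible_matrix_inv:
  fixes A :: "'a::field^'n^'n"
  assumes "invertible A"
  shows "invertible (matrix_inv A)"
  using matrix_inv_left[OF assms] invertible_right_inverse by blast

lemma matrix_inv_matrix_inv:
  fixes A :: "'a::field^'n^'n"
  assumes "invertible A"
  shows "matrix_inv (matrix_inv A) = A"
  by (rule matrix_inv_unique[OF matrix_inv_left[OF assms]])

lemma matrix_inv_cancel:
  fixes A :: "'a::field^'n^'n"
  assumes "invertible A"
  shows "matrix_inv A ** A ** X = X" "A ** matrix_inv A ** X = X"
    "X ** matrix_inv A ** A = X" "X ** A ** matrix_inv A = X"
  by (simp_all add: matrix_mul_assoc[symmetric] matrix_inv_left[OF assms] matrix_inv_right[OF assms])

lemma matrix_add_rdistrib: "((A::'a::semiring_1^'n^'m) + B) ** C = A ** C + B ** C"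
  by (vector matrix_matrix_mult_def sum.distrib[symmetric] field_simps)

lemma matrix_diff_ldistrib: "(A::'a::ring_1^'n^'m) ** (B - C) = A ** B - A ** C"
  by (vector matrix_matrix_mult_def sum_subtractf[symmetric] field_simps)

lemma matrix_diff_rdistrib: "((A::'a::ring_1^'n^'m) - B) ** C = A ** C - B ** C"
  by (vector matrix_matrix_mult_def sum_subtractf[symmetric] field_simps)

lemma matrix_neg_mult: "(- (A::'a::ring_1^'n^'m)) ** B = - (A ** B)"
  by (vector matrix_matrix_mult_def sum_negf[symmetric] field_simps)

lemma matrix_mult_neg: "(A::'a::ring_1^'n^'m) ** (- B) = - (A ** B)"
  by (vector matrix_matrix_mult_def sum_negf[symmetric] field_simps)

lemma matrix_scaleR_mult: "(c *\<^sub>R (A::real^'n^'m)) ** B = c *\<^sub>R (A ** B)"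
  by (simp add: scalar_matrix_assoc)

lemma matrix_mult_scaleR: "(A::real^'n^'m) ** (c *\<^sub>R B) = c *\<^sub>R (A ** B)"
  by (simp add: matrix_scalar_ac scalar_matrix_assoc)

lemmas matrix_mult_distribs = matrix_add_rdistrib matrix_add_ldistrib matrix_diff_ldistrib
  matrix_diff_rdistrib matrix_neg_mult matrix_mult_neg matrix_scaleR_mult matrix_mult_scaleR

lemma transpose_diff: "transpose ((A::'a::ring_1^'n^'m) - B) = transpose A - transpose B"
  by (vector transpose_def)

lemma transpose_uminus: "transpose (- (A::'a::ring_1^'n^'m)) = - transpose A"
  by (vector transpose_def)

lemma matrix_vector_mult_uminus: "(- (X::real^'n^'m)) *v v = - (X *v v)"
  by (simp add: vec_eq_iff matrix_vector_mult_def sum_negf)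

lemma inner_matrix_vector_mult: "(x::real^'n) \<bullet> (M *v y) = (transpose M *v x) \<bullet> y"
  by (simp add: dot_lmul_matrix[symmetric])

lemma matrix_vector_mult_inner: "(M *v x) \<bullet> (y::real^'n) = x \<bullet> (transpose M *v y)"
  by (metis inner_matrix_vector_mult transpose_transpose)

lemma continuous_on_matrix_vector_mult [continuous_intros]:
  "continuous_on S f \<Longrightarrow> continuous_on S (\<lambda>x. (M::real^'n^'m) *v f x)"
  by (rule bounded_linear.continuous_on[OF matrix_vector_mul_bounded_linear])

lemma sum_UNIV_Plus:
  "sum f (UNIV :: ('a::finite + 'b::finite) set) = (\<Sum>i\<in>UNIV. f (Inl i)) + (\<Sum>i\<in>UNIV. f (Inr i))"
  by (subst UNIV_Plus_UNIV[symmetric], subst sum.Plus) auto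

lemma mult_J0_entries:
  fixes X :: "'n::finite rmat"
  shows "(X ** J0) $ a $ Inl j = - X $ a $ Inr j" "(X ** J0) $ a $ Inr j = X $ a $ Inl j"
    "(J0 ** X) $ Inl i $ b = X $ Inr i $ b" "(J0 ** X) $ Inr i $ b = - X $ Inl i $ b"
  by (simp_all add: matrix_matrix_mult_def J0_def Omega_def sum_UNIV_Plus
      if_distrib if_distribR sum.delta sum.delta' cong: if_cong)

lemma J0_squared: "(J0::'n::finite rmat) ** J0 = - mat 1"
  by (simp add: vec_eq_iff split_sum_all mult_J0_entries) (simp add: J0_def Omega_def mat_def)

lemma transpose_J0: "transpose (J0::'n::finite rmat) = - J0"
  by (simp add: vec_eq_iff transpose_def J0_def Omega_def split: sum.split)

lemma commutes_J0_iff_blocks: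
  fixes X :: "'n::finite rmat"
  shows "X ** J0 = J0 ** X \<longleftrightarrow>
    (\<forall>i j. X $ Inr i $ Inr j = X $ Inl i $ Inl j \<and> X $ Inr i $ Inl j = - X $ Inl i $ Inr j)"
  by (auto simp: vec_eq_iff split_sum_all mult_J0_entries)

section \<open>The complex determinant detbar\<close>

definition complex_block :: "'n::finite rmat \<Rightarrow> complex^'n^'n" where
  "complex_block A =
     (\<chi> i j. complex_of_real (A $ Inl i $ Inl j) + \<i> * complex_of_real (A $ Inl i $ Inr j))"

lemma detbar_std_eq_det_complex_block: "detbar_std A = det (complex_block A)"
  by (simp add: detbar_std_def complex_block_def)

lemma complex_block_mat_1: "complex_block (mat 1 :: 'n::finite rmat) = mat 1"
  by (simp add: complex_block_def vec_eq_iff mat_def)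

lemma complex_block_mult:
  fixes X Y :: "'n::finite rmat"
  assumes "Y ** J0 = J0 ** Y"
  shows "complex_block (X ** Y) = complex_block X ** complex_block Y"
proof -
  have "Y $ Inr i $ Inr j = Y $ Inl i $ Inl j" "Y $ Inr i $ Inl j = - Y $ Inl i $ Inr j" for i j
    using assms commutes_J0_iff_blocks by blast+
  then show ?thesis
    unfolding complex_block_def matrix_matrix_mult_def
    by (simp add: vec_eq_iff sum_UNIV_Plus sum.distrib[symmetric] sum_distrib_left
        complex_eq_iff algebra_simps)
qed

lemma det_complex_block_transpose:
  fixes Y :: "'n::finite rmat"
  assumes "Y ** J0 = J0 ** Y"
  shows "det (complex_block (transpose Y)) = cnj (det (complex_block Y))"
proof -
  have "Y $ Inr i $ Inl j = - Y $ Inl i $ Inr j" for i j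
    using assms commutes_J0_iff_blocks by blast
  then have "complex_block (transpose Y) = transpose (\<chi> i j. cnj (complex_block Y $ i $ j))"
    by (simp add: complex_block_def transpose_def vec_eq_iff complex_eq_iff)
  then show ?thesis
    by (simp only: det_transpose) (simp add: det_def)
qed

lemma matrix_inv_commute:
  fixes A B :: "'a::field^'n^'n"
  assumes "A ** B = B ** A" "invertible A"
  shows "matrix_inv A ** B = B ** matrix_inv A"
proof -
  have "matrix_inv A ** B = matrix_inv A ** (B ** A) ** matrix_inv A"
    by (simp add: matrix_mul_assoc matrix_inv_cancel[OF assms(2)])
  also have "\<dots> = B ** matrix_inv A"
    by (simp add: assms(1)[symmetric] matrix_mul_assoc matrix_inv_cancel[OF assms(2)])
  finally show ?thesis .
qed

lemma conjugate_mult: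
  fixes S :: "'a::field^'n^'n"
  assumes "invertible S"
  shows "S ** (X ** Y) ** matrix_inv S = (S ** X ** matrix_inv S) ** (S ** Y ** matrix_inv S)"
  by (simp add: matrix_mul_assoc matrix_inv_cancel[OF assms])

lemma det_complex_block_conjugate:
  fixes R Y :: "'n::finite rmat"
  assumes "R ** J0 = J0 ** R" "invertible R" "Y ** J0 = J0 ** Y"
  shows "det (complex_block (R ** Y ** matrix_inv R)) = det (complex_block Y)"
proof -
  have inv_commutes: "matrix_inv R ** J0 = J0 ** matrix_inv R"
    by (rule matrix_inv_commute[OF assms(1,2)])
  have "complex_block R ** complex_block (matrix_inv R) = mat 1"
    by (simp add: complex_block_mult[OF inv_commutes, symmetric] matrix_inv_right[OF assms(2)]
        complex_block_mat_1)
  then have "det (complex_block R) * det (complex_block (matrix_inv R)) = 1"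
    by (metis det_I det_mul)
  then show ?thesis
    by (simp add: complex_block_mult inv_commutes assms(3) det_mul)
qed

definition conjugates_to_J0 :: "'n::finite rmat \<Rightarrow> 'n rmat \<Rightarrow> bool" where
  "conjugates_to_J0 J S \<longleftrightarrow> invertible S \<and> S ** J ** matrix_inv S = J0"

lemma conjugates_to_J0_iff: "conjugates_to_J0 J S \<longleftrightarrow> invertible S \<and> S ** J = J0 ** S"
proof (cases "invertible S")
  case True
  have "S ** J ** matrix_inv S = J0 \<longleftrightarrow> S ** J = J0 ** S"
    by (metis matrix_inv_cancel(3,4)[OF True])
  then show ?thesis
    by (simp add: conjugates_to_J0_def)
qed (simp add: conjugates_to_J0_def)

lemma conjugate_commutes_J0:
  assumes S: "conjugates_to_J0 J S" and X: "X ** J = J ** X"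
  shows "(S ** X ** matrix_inv S) ** J0 = J0 ** (S ** X ** matrix_inv S)"
proof -
  have inv: "invertible S" and J0: "J0 = S ** J ** matrix_inv S"
    using S by (simp_all add: conjugates_to_J0_def)
  show ?thesis
    unfolding J0 by (simp add: conjugate_mult[OF inv, symmetric] X)
qed

lemma detbar_eq_det_complex_block:
  fixes J :: "'n::finite rmat"
  assumes S: "conjugates_to_J0 J S" and X: "X ** J = J ** X"
  shows "detbar J X = det (complex_block (S ** X ** matrix_inv S))"
proof -
  define S' :: "'n rmat" where "S' = (SOME S. invertible S \<and> S ** J ** matrix_inv S = J0)"
  have S': "conjugates_to_J0 J S'"
    using S unfolding S'_def conjugates_to_J0_def by (rule someI)
  have invS: "invertible S" and SJ: "S ** J = J0 ** S"
    using S by (simp_all add: conjugates_to_J0_iff)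
  have invS': "invertible S'" and S'J: "S' ** J = J0 ** S'"
    using S' by (simp_all add: conjugates_to_J0_iff)
  define R where "R = S ** matrix_inv S'"
  have invR: "invertible R"
    unfolding R_def by (intro invertible_mult invS invertible_matrix_inv invS')
  have "R ** J0 = S ** (matrix_inv S' ** J0 ** S') ** matrix_inv S'"
    by (simp add: R_def matrix_mul_assoc matrix_inv_cancel[OF invS'])
  also have "matrix_inv S' ** J0 ** S' = matrix_inv S' ** (S' ** J)"
    by (simp add: S'J matrix_mul_assoc)
  also have "\<dots> = J"
    by (simp add: matrix_mul_assoc matrix_inv_cancel[OF invS'])
  finally have RJ0: "R ** J0 = J0 ** R"
    by (simp add: SJ R_def matrix_mul_assoc)
  have inv_R: "matrix_inv R = S' ** matrix_inv S"
    by (rule matrix_inv_unique)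
      (simp add: R_def matrix_mul_assoc matrix_inv_cancel[OF invS'] matrix_inv_right[OF invS])
  have "S ** X ** matrix_inv S = R ** (S' ** X ** matrix_inv S') ** matrix_inv R"
    unfolding inv_R by (simp add: R_def matrix_mul_assoc matrix_inv_cancel[OF invS'])
  then have "det (complex_block (S ** X ** matrix_inv S)) = det (complex_block (S' ** X ** matrix_inv S'))"
    using det_complex_block_conjugate[OF RJ0 invR conjugate_commutes_J0[OF S' X]] by simp
  then show ?thesis
    by (simp add: detbar_def Let_def S'_def detbar_std_eq_det_complex_block)
qed

lemma detbar_mult:
  assumes S: "conjugates_to_J0 J S" and "X ** J = J ** X" "Y ** J = J ** Y"
  shows "detbar J (X ** Y) = detbar J X * detbar J Y"
proof -
  have inv: "invertible S"
    using S by (simp add: conjugates_to_J0_def)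
  have "(X ** Y) ** J = J ** (X ** Y)"
    by (metis assms(2,3) matrix_mul_assoc)
  then show ?thesis
    using assms by (simp add: detbar_eq_det_complex_block conjugate_mult[OF inv] det_mul
        complex_block_mult[OF conjugate_commutes_J0])
qed

lemma detbar_mat_1:
  assumes "conjugates_to_J0 J S"
  shows "detbar J (mat 1) = 1"
  using assms by (simp add: detbar_eq_det_complex_block conjugates_to_J0_def
      matrix_inv_right complex_block_mat_1)

section \<open>Hermitian metrics and unitary eigenframes\<close>

lemma quadratic_nonneg_imp_linear_coeff_zero:
  fixes b c :: real
  assumes nonneg: "\<And>t. 0 \<le> 2 * t * b + t\<^sup>2 * c"
  shows "b = 0"
proof (rule ccontr)
  assume "b \<noteq> 0"
  define a where "a = \<bar>c\<bar>"
  have a: "a \<ge> 0" "c \<le> a"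
    by (simp_all add: a_def)
  define t where "t = - b / (a + 1)"
  have "2 * t * b + t\<^sup>2 * c \<le> 2 * t * b + t\<^sup>2 * a"
    using a by (simp add: mult_left_mono)
  also have "\<dots> = b\<^sup>2 * (- a - 2) / (a + 1)\<^sup>2"
  proof -
    have "a + 1 \<noteq> 0"
      using a by linarith
    then show ?thesis
      by (simp add: t_def divide_simps power2_eq_square) (simp add: algebra_simps)
  qed
  also have "\<dots> < 0"
    using \<open>b \<noteq> 0\<close> a by (intro divide_neg_pos mult_pos_neg) auto
  finally show False
    using nonneg[of t] by simp
qed

locale hermitian_metric =
  fixes G J :: "'n::finite rmat"
  assumes symmetric: "transpose G = G"
    and positive: "\<And>x. x \<noteq> 0 \<Longrightarrow> x \<bullet> (G *v x) > 0"
    and J_squared: "J ** J = - mat 1"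
    and J_isometry: "transpose J ** G ** J = G"
begin

definition g :: "real^('n+'n) \<Rightarrow> real^('n+'n) \<Rightarrow> real" where
  "g x y = x \<bullet> (G *v y)"

lemma g_sym: "g x y = g y x"
  unfolding g_def by (subst inner_matrix_vector_mult) (simp only: symmetric inner_commute)

lemma g_add_left: "g (x + y) z = g x z + g y z"
  by (simp add: g_def inner_add_left)

lemma g_add_right: "g x (y + z) = g x y + g x z"
  by (simp add: g_def inner_add_right matrix_vector_right_distrib)

lemma g_diff_left: "g (x - y) z = g x z - g y z"
  by (simp add: g_def inner_diff_left)

lemma g_diff_right: "g x (y - z) = g x y - g x z"
  by (simp add: g_def inner_diff_right matrix_vector_mult_diff_distrib)

lemma g_scaleR_left: "g (c *\<^sub>R x) z = c * g x z"
  by (simp add: g_def)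

lemma g_scaleR_right: "g x (c *\<^sub>R z) = c * g x z"
  by (simp add: g_def matrix_vector_mult_scaleR)

lemmas g_linear = g_add_left g_add_right g_diff_left g_diff_right g_scaleR_left g_scaleR_right

lemma g_zero_left [simp]: "g 0 z = 0"
  by (simp add: g_def)

lemma g_pos: "x \<noteq> 0 \<Longrightarrow> g x x > 0"
  unfolding g_def by (rule positive)

lemma g_self_eq_0_iff: "g x x = 0 \<longleftrightarrow> x = 0"
  using g_pos[of x] by (cases "x = 0") auto

lemma g_self_adjoint:
  assumes "transpose A ** G = G ** A"
  shows "g x (A *v y) = g (A *v x) y"
proof -
  have "g x (A *v y) = x \<bullet> (transpose A *v (G *v y))"
    by (simp only: g_def matrix_vector_mul_assoc assms)
  then show ?thesis
    by (simp only: inner_matrix_vector_mult transpose_transpose g_def)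
qed

lemma J_J_apply: "J *v (J *v x) = - x"
  by (simp add: matrix_vector_mul_assoc J_squared matrix_vector_mult_uminus)

lemma g_J: "g (J *v x) (J *v y) = g x y"
proof -
  have "g (J *v x) (J *v y) = x \<bullet> ((transpose J ** G ** J) *v y)"
    by (simp only: g_def matrix_vector_mult_inner matrix_vector_mul_assoc matrix_mul_assoc)
  then show ?thesis
    by (simp only: J_isometry g_def)
qed

lemma g_J_right: "g x (J *v y) = - g (J *v x) y"
  using g_J[of "J *v x" y] by (simp add: J_J_apply g_def)

lemma g_self_J: "g x (J *v x) = 0"
  using g_J_right[of x x] g_sym[of x "J *v x"] by simp

lemma rayleigh_quotient_minimum:
  assumes W: "subspace W" and x: "x \<in> W" "x \<noteq> 0"
  obtains y m where "y \<in> W" "y \<noteq> 0" "g y (A *v y) = m * g y y"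
    "\<And>z. z \<in> W \<Longrightarrow> m * g z z \<le> g z (A *v z)"
proof -
  define S where "S = W \<inter> sphere 0 1"
  define f where "f x = g x (A *v x) / g x x" for x
  have "compact S"
    unfolding S_def by (intro closed_Int_compact closed_subspace W compact_sphere)
  moreover have "(1 / norm x) *\<^sub>R x \<in> S"
    using x W by (simp add: S_def subspace_scale)
  moreover have "\<forall>x\<in>S. g x x \<noteq> 0"
    by (auto simp: S_def g_self_eq_0_iff)
  then have "continuous_on S f"
    unfolding f_def g_def by (intro continuous_intros) auto
  ultimately obtain y where yS: "y \<in> S" and ymin: "\<And>z. z \<in> S \<Longrightarrow> f y \<le> f z"
    using continuous_attains_inf[of S f] by blast
  have y: "y \<in> W" "y \<noteq> 0"
    using yS by (auto simp: S_def)
  have "f y * g z z \<le> g z (A *v z)" if "z \<in> W" for z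
  proof (cases "z = 0")
    case False
    have "(1 / norm z) *\<^sub>R z \<in> S"
      using that False W by (simp add: S_def subspace_scale)
    moreover have "f ((1 / norm z) *\<^sub>R z) = f z"
      using False by (simp add: f_def g_linear matrix_vector_mult_scaleR)
    ultimately have "f y \<le> f z"
      using ymin by metis
    then show ?thesis
      using g_pos[OF False] by (simp add: f_def pos_le_divide_eq)
  qed simp
  moreover have "g y (A *v y) = f y * g y y"
    using g_pos[OF y(2)] by (simp add: f_def)
  ultimately show ?thesis
    using that y by blast
qed

lemma self_adjoint_eigenvector:
  assumes A: "transpose A ** G = G ** A"
    and W: "subspace W" "\<And>x. x \<in> W \<Longrightarrow> A *v x \<in> W" and x: "x \<in> W" "x \<noteq> 0"
  shows "\<exists>y\<in>W. y \<noteq> 0 \<and> (\<exists>mu. A *v y = mu *\<^sub>R y)"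
proof -
  obtain y m where y: "y \<in> W" "y \<noteq> 0" and ym: "g y (A *v y) = m * g y y"
    and min: "\<And>z. z \<in> W \<Longrightarrow> m * g z z \<le> g z (A *v z)"
    using rayleigh_quotient_minimum[OF W(1) x] by blast
  define z where "z = A *v y - m *\<^sub>R y"
  have z: "z \<in> W"
    unfolding z_def using y W by (simp add: subspace_diff subspace_scale)
  have expand: "g (y + t *\<^sub>R z) (A *v (y + t *\<^sub>R z)) - m * g (y + t *\<^sub>R z) (y + t *\<^sub>R z)
      = 2 * t * g z z + t\<^sup>2 * (g z (A *v z) - m * g z z)" for t
  proof -
    have "g y (A *v z) = g z (A *v y)"
      using g_self_adjoint[OF A, of y z] g_sym by simp
    moreover have "g z (A *v y) = g z z + m * g z y"
      by (simp add: z_def g_linear)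
    ultimately show ?thesis
      using ym g_sym[of y z]
      by (simp add: g_linear matrix_vector_right_distrib matrix_vector_mult_scaleR
          power2_eq_square algebra_simps)
  qed
  have "0 \<le> 2 * t * g z z + t\<^sup>2 * (g z (A *v z) - m * g z z)" for t
    using min[of "y + t *\<^sub>R z"] expand[of t] y z W by (simp add: subspace_add subspace_scale)
  then have "g z z = 0"
    by (rule quadratic_nonneg_imp_linear_coeff_zero)
  then have "A *v y = m *\<^sub>R y"
    by (simp add: g_self_eq_0_iff z_def)
  then show ?thesis
    using y by blast
qed

lemma unit_eigenvector_complement:
  assumes A: "transpose A ** G = G ** A" "A ** J = J ** A"
    and W: "subspace W" "\<forall>x\<in>W. J *v x \<in> W" "\<forall>x\<in>W. A *v x \<in> W"
    and x: "x \<in> W" "g x x = 1" "A *v x = mu *\<^sub>R x"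
  defines "W' \<equiv> {y \<in> W. g y x = 0 \<and> g y (J *v x) = 0}"
  shows "subspace W'" "\<forall>y\<in>W'. J *v y \<in> W'" "\<forall>y\<in>W'. A *v y \<in> W'" "dim W' < dim W"
    "\<And>y. y \<in> W \<Longrightarrow> y - g y x *\<^sub>R x - g y (J *v x) *\<^sub>R (J *v x) \<in> W'"
proof -
  show W': "subspace W'"
    unfolding subspace_def W'_def using W by (auto simp: subspace_add subspace_scale subspace_0 g_linear)
  show "\<forall>y\<in>W'. J *v y \<in> W'"
  proof
    fix y assume y: "y \<in> W'"
    have "g (J *v y) x = - g (J *v x) y"
      using g_J_right[of x y] g_sym by metis
    then show "J *v y \<in> W'"
      using y W g_sym[of y] by (auto simp: W'_def g_J)
  qed
  have "A *v (J *v x) = J *v (A *v x)"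
    by (simp add: matrix_vector_mul_assoc A(2))
  then have AJx: "A *v (J *v x) = mu *\<^sub>R (J *v x)"
    by (simp add: x(3) matrix_vector_mult_scaleR)
  show "\<forall>y\<in>W'. A *v y \<in> W'"
    using W unfolding W'_def
    by (auto simp: g_self_adjoint[OF A(1), symmetric] x(3) AJx g_linear)
  have "x \<notin> W'" "W' \<subseteq> W"
    using x by (auto simp: W'_def)
  then have "W' \<subset> W"
    using x(1) by blast
  then show "dim W' < dim W"
    using W' W(1) by (intro dim_psubset) (simp add: span_eq_iff[THEN iffD2])
  show "y - g y x *\<^sub>R x - g y (J *v x) *\<^sub>R (J *v x) \<in> W'" if "y \<in> W" for y
  proof -
    have "g (J *v x) (J *v x) = 1" "g (J *v x) x = 0"
      using g_self_J g_sym x(2) by (metis g_J)+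
    then show ?thesis
      using that x W g_self_J[of x] unfolding W'_def
      by (simp add: g_linear subspace_diff subspace_scale)
  qed
qed

definition unitary_frame :: "('n \<Rightarrow> real^('n+'n)) \<Rightarrow> bool" where
  "unitary_frame f \<longleftrightarrow> (\<forall>i j. g (f i) (f j) = (if i = j then 1 else 0) \<and> g (f i) (J *v f j) = 0)"

text \<open>B \<union> J B is a real basis of W, i.e. B is a unitary basis of W viewed as a complex
  vector space with complex structure J.\<close>

definition unitary_eigenbasis :: "'n rmat \<Rightarrow> (real^('n+'n)) set \<Rightarrow> (real^('n+'n)) set \<Rightarrow> bool"
  where "unitary_eigenbasis A W B \<longleftrightarrow> finite B \<and> B \<subseteq> W \<and> (\<forall>v\<in>B. \<exists>mu. A *v v = mu *\<^sub>R v) \<and>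
    (\<forall>v\<in>B. \<forall>w\<in>B. g v w = (if v = w then 1 else 0) \<and> g v (J *v w) = 0) \<and>
    W \<subseteq> span (B \<union> (\<lambda>v. J *v v) ` B)"

lemma unitary_eigenbasis_insert:
  assumes A: "transpose A ** G = G ** A" "A ** J = J ** A"
    and W: "subspace W" "\<forall>x\<in>W. J *v x \<in> W" "\<forall>x\<in>W. A *v x \<in> W"
    and x: "x \<in> W" "g x x = 1" "A *v x = mu *\<^sub>R x"
    and B': "unitary_eigenbasis A {y \<in> W. g y x = 0 \<and> g y (J *v x) = 0} B'"
  shows "unitary_eigenbasis A W (insert x B')"
proof -
  define W' where "W' = {y \<in> W. g y x = 0 \<and> g y (J *v x) = 0}"
  note W' = unit_eigenvector_complement[OF A W x, folded W'_def]
  have B'W': "B' \<subseteq> W'" and span_B': "W' \<subseteq> span (B' \<union> (\<lambda>v. J *v v) ` B')"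
    using B' by (simp_all add: unitary_eigenbasis_def W'_def)
  have orth: "g v x = 0" "g x v = 0" "g v (J *v x) = 0" "g x (J *v v) = 0" if "v \<in> B'" for v
  proof -
    show vx: "g v x = 0" "g v (J *v x) = 0"
      using that B'W' by (auto simp: W'_def)
    then show "g x v = 0" "g x (J *v v) = 0"
      using g_sym[of x v] g_sym[of "J *v x" v] g_J_right[of x v] by simp_all
  qed
  have "x \<notin> B'"
    using orth(1) x(2) by fastforce
  define B where "B = insert x B'"
  have "W \<subseteq> span (B \<union> (\<lambda>v. J *v v) ` B)"
  proof
    fix y assume "y \<in> W"
    have "span (B' \<union> (\<lambda>v. J *v v) ` B') \<subseteq> span (B \<union> (\<lambda>v. J *v v) ` B)"
      by (intro span_mono) (auto simp: B_def)
    then have "y - g y x *\<^sub>R x - g y (J *v x) *\<^sub>R (J *v x) \<in> span (B \<union> (\<lambda>v. J *v v) ` B)"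
      using W'(5)[OF \<open>y \<in> W\<close>] span_B' by blast
    moreover have "x \<in> span (B \<union> (\<lambda>v. J *v v) ` B)" "J *v x \<in> span (B \<union> (\<lambda>v. J *v v) ` B)"
      by (simp_all add: B_def span_base)
    ultimately show "y \<in> span (B \<union> (\<lambda>v. J *v v) ` B)"
      by (metis (no_types, lifting) diff_add_cancel span_add span_scale)
  qed
  moreover have "\<forall>v\<in>B. \<forall>w\<in>B. g v w = (if v = w then 1 else 0) \<and> g v (J *v w) = 0"
    using B' orth \<open>x \<notin> B'\<close> x(2) g_self_J[of x] by (auto simp: B_def unitary_eigenbasis_def)
  moreover have "finite B" "B \<subseteq> W" "\<forall>v\<in>B. \<exists>mu. A *v v = mu *\<^sub>R v"
    using B' B'W' x unfolding B_def W'_def unitary_eigenbasis_def by auto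
  ultimately show ?thesis
    by (simp add: unitary_eigenbasis_def B_def)
qed

lemma ex_unitary_eigenbasis:
  assumes A: "transpose A ** G = G ** A" "A ** J = J ** A"
  shows "subspace W \<Longrightarrow> \<forall>x\<in>W. J *v x \<in> W \<Longrightarrow> \<forall>x\<in>W. A *v x \<in> W \<Longrightarrow>
    \<exists>B. unitary_eigenbasis A W B"
proof (induction "dim W" arbitrary: W rule: less_induct)
  case less
  note W = less.prems
  show ?case
  proof (cases "W \<subseteq> {0}")
    case True
    then show ?thesis
      by (intro exI[of _ "{}"]) (auto simp: unitary_eigenbasis_def)
  next
    case False
    then obtain x1 mu where x1: "x1 \<in> W" "x1 \<noteq> 0" "A *v x1 = mu *\<^sub>R x1"
      using self_adjoint_eigenvector[OF A(1) W(1)] W(3) by blast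
    define x where "x = (1 / sqrt (g x1 x1)) *\<^sub>R x1"
    have x: "x \<in> W" "g x x = 1" "A *v x = mu *\<^sub>R x"
      using x1 W(1) g_pos[OF x1(2)]
      by (simp_all add: x_def subspace_scale g_linear matrix_vector_mult_scaleR
          power2_eq_square[symmetric] real_sqrt_pow2)
    note W' = unit_eigenvector_complement[OF A W x]
    obtain B' where "unitary_eigenbasis A {y \<in> W. g y x = 0 \<and> g y (J *v x) = 0} B'"
      using less.hyps[OF W'(4) W'(1-3)] by blast
    then show ?thesis
      using unitary_eigenbasis_insert[OF A W x] by blast
  qed
qed

lemma ex_unitary_eigenframe:
  assumes "transpose A ** G = G ** A" "A ** J = J ** A"
  obtains f where "unitary_frame f" "\<And>j. \<exists>mu. A *v f j = mu *\<^sub>R f j"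
proof -
  obtain B where B: "finite B" "\<forall>v\<in>B. \<exists>mu. A *v v = mu *\<^sub>R v"
    "\<forall>v\<in>B. \<forall>w\<in>B. g v w = (if v = w then 1 else 0) \<and> g v (J *v w) = 0"
    "UNIV \<subseteq> span (B \<union> (\<lambda>v. J *v v) ` B)"
    using ex_unitary_eigenbasis[OF assms, of UNIV] by (auto simp: unitary_eigenbasis_def)
  have "2 * CARD('n) \<le> card (B \<union> (\<lambda>v. J *v v) ` B)"
    using span_card_ge_dim[OF _ B(4)] B(1) by simp
  also have "\<dots> \<le> 2 * card B"
    using card_Un_le[of B "(\<lambda>v. J *v v) ` B"] card_image_le[OF B(1), of "\<lambda>v. J *v v"] by simp
  finally obtain f where f: "f ` (UNIV::'n set) \<subseteq> B" "inj f"
    using card_le_inj[of "UNIV::'n set" B] B(1) by auto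
  have "unitary_frame f"
    unfolding unitary_frame_def
  proof (intro allI)
    fix i j
    have "f i \<in> B" "f j \<in> B"
      using f(1) by auto
    then show "g (f i) (f j) = (if i = j then 1 else 0) \<and> g (f i) (J *v f j) = 0"
      using B(3) f(2) by (simp add: inj_eq)
  qed
  moreover have "\<exists>mu. A *v f j = mu *\<^sub>R f j" for j
    using f(1) B(2) by auto
  ultimately show ?thesis
    using that by blast
qed

end

lemma matrix_eq_columnwise:
  fixes X Y :: "real^'k^'m"
  assumes "\<And>c. column c X = column c Y"
  shows "X = Y"
  using assms by (simp add: vec_eq_iff column_def)

lemma column_matrix_mult: "column c ((M::real^'k^'m) ** X) = M *v column c X"
  by (simp add: vec_eq_iff column_def matrix_matrix_mult_def matrix_vector_mult_def)

lemma column_mult_J0: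
  fixes X :: "'n::finite rmat"
  shows "column (Inl j) (X ** J0) = - column (Inr j) X" "column (Inr j) (X ** J0) = column (Inl j) X"
  by (simp_all add: vec_eq_iff column_def mult_J0_entries)

lemma column_mult_diagonal:
  fixes X :: "real^'k^'m"
  shows "column c (X ** (\<chi> a b. if a = b then d a else 0)) = d c *\<^sub>R column c X"
  by (simp add: vec_eq_iff column_def matrix_matrix_mult_def if_distrib if_distribR sum.delta'
      cong: if_cong)

text \<open>Putting J f_j in the first block makes the frame matrix intertwine J with J0.\<close>

definition frame_matrix :: "'n::finite rmat \<Rightarrow> ('n \<Rightarrow> real^('n+'n)) \<Rightarrow> 'n rmat" where
  "frame_matrix J f = (\<chi> i c. (case c of Inl j \<Rightarrow> J *v f j | Inr j \<Rightarrow> f j) $ i)"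

lemma column_frame_matrix:
  "column c (frame_matrix J f) = (case c of Inl j \<Rightarrow> J *v f j | Inr j \<Rightarrow> f j)"
  by (simp add: vec_eq_iff column_def frame_matrix_def)

lemma frame_matrix_J:
  assumes "J ** J = - mat 1"
  shows "J ** frame_matrix J f = frame_matrix J f ** J0"
proof (rule matrix_eq_columnwise)
  fix c
  have "column c (J ** frame_matrix J f) = J *v column c (frame_matrix J f)"
    by (rule column_matrix_mult)
  then show "column c (J ** frame_matrix J f) = column c (frame_matrix J f ** J0)"
    by (cases c) (simp_all add: column_frame_matrix column_mult_J0 matrix_vector_mul_assoc assms
        matrix_vector_mult_uminus)
qed

lemma conjugates_to_J0_matrix_inv:
  assumes P: "invertible P" and JP: "J ** P = P ** J0"
  shows "conjugates_to_J0 J (matrix_inv P)"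
proof -
  have "matrix_inv P ** J = matrix_inv P ** (J ** P) ** matrix_inv P"
    by (simp add: matrix_mul_assoc matrix_inv_cancel[OF P])
  also have "\<dots> = J0 ** matrix_inv P"
    by (simp add: JP matrix_mul_assoc matrix_inv_cancel[OF P])
  finally show ?thesis
    by (simp add: conjugates_to_J0_iff invertible_matrix_inv[OF P])
qed

lemma transpose_mult_mult_entry:
  "(transpose P ** G ** P) $ a $ b = column a P \<bullet> (G *v column b (P::real^'k^'m))"
  by (simp add: matrix_matrix_mult_def matrix_vector_mult_def transpose_def column_def
      inner_vec_def sum_distrib_left sum_distrib_right mult.assoc) (rule sum.swap)

context hermitian_metric
begin

lemma unitary_frame_matrix:
  assumes "unitary_frame f"
  shows "transpose (frame_matrix J f) ** G ** frame_matrix J f = mat 1"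
proof -
  have "g (column a (frame_matrix J f)) (column b (frame_matrix J f)) = (mat 1 :: 'n rmat) $ a $ b"
    for a b
    using assms g_sym[of "J *v f _" "f _"]
    by (cases a; cases b) (simp_all add: unitary_frame_def column_frame_matrix g_J mat_def)
  then show ?thesis
    by (simp add: vec_eq_iff transpose_mult_mult_entry g_def)
qed

lemma unitary_frame_conjugates_to_J0:
  assumes "unitary_frame f"
  shows "invertible (frame_matrix J f)" "conjugates_to_J0 J (matrix_inv (frame_matrix J f))"
proof -
  show inv: "invertible (frame_matrix J f)"
    using unitary_frame_matrix[OF assms] invertible_left_inverse by (metis matrix_mul_assoc)
  show "conjugates_to_J0 J (matrix_inv (frame_matrix J f))"
    by (rule conjugates_to_J0_matrix_inv[OF inv frame_matrix_J[OF J_squared]])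
qed

lemma ex_unitary_frame:
  obtains f where "unitary_frame f"
proof -
  have "transpose (0 :: 'n rmat) = 0"
    by (simp add: vec_eq_iff transpose_def)
  then have "transpose (0 :: 'n rmat) ** G = G ** 0" "(0 :: 'n rmat) ** J = J ** 0"
    by simp_all
  then show ?thesis
    using ex_unitary_eigenframe that by blast
qed

lemma ex_conjugates_to_J0: "\<exists>S. conjugates_to_J0 J S"
  using ex_unitary_frame unitary_frame_conjugates_to_J0(2) by blast

lemma invertible_G: "invertible G"
proof -
  have "G *v x = 0 \<Longrightarrow> x = 0" for x
    using positive[of x] by fastforce
  then show ?thesis
    using matrix_left_invertible_ker invertible_left_inverse by blast
qed

definition g_adjoint :: "'n rmat \<Rightarrow> 'n rmat" where
  "g_adjoint X = matrix_inv G ** transpose X ** G"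

lemma g_adjoint_mult: "g_adjoint (X ** Y) = g_adjoint Y ** g_adjoint X"
  by (simp add: g_adjoint_def matrix_transpose_mul matrix_mul_assoc matrix_inv_cancel[OF invertible_G])

lemma g_adjoint_scaleR_diff: "g_adjoint (c *\<^sub>R (X - Y)) = c *\<^sub>R (g_adjoint X - g_adjoint Y)"
  by (simp add: g_adjoint_def transpose_scalar transpose_diff matrix_mult_distribs)

lemma g_adjoint_J: "g_adjoint J = - J"
proof -
  have "transpose J ** G = transpose J ** G ** J ** (- J)"
    by (simp add: matrix_mul_assoc[symmetric] matrix_mult_neg J_squared)
  also have "\<dots> = - (G ** J)"
    by (simp add: J_isometry matrix_mult_neg)
  finally have "g_adjoint J = matrix_inv G ** (- (G ** J))"
    by (simp add: g_adjoint_def matrix_mul_assoc[symmetric])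
  then show ?thesis
    by (simp add: matrix_mul_assoc matrix_mult_neg matrix_inv_cancel[OF invertible_G])
qed

lemma g_adjoint_commutes_J:
  assumes "X ** J = J ** X"
  shows "g_adjoint X ** J = J ** g_adjoint X"
  using arg_cong[OF assms, of g_adjoint]
  by (simp add: g_adjoint_mult g_adjoint_J matrix_neg_mult matrix_mult_neg)

lemma C_of_g_adjoint: "C_of J (g_adjoint X) = g_adjoint (C_of J X)"
  by (simp add: C_of_def g_adjoint_scaleR_diff g_adjoint_mult g_adjoint_J matrix_neg_mult
      matrix_mult_neg matrix_mul_assoc)

text \<open>In the basis of a unitary frame the G-adjoint becomes the transpose.\<close>

lemma detbar_g_adjoint:
  assumes X: "X ** J = J ** X"
  shows "detbar J (g_adjoint X) = cnj (detbar J X)"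
proof -
  obtain f where f: "unitary_frame f"
    by (rule ex_unitary_frame)
  define P where "P = frame_matrix J f"
  define S where "S = transpose P ** G"
  have "S ** P = mat 1"
    using unitary_frame_matrix[OF f] by (simp add: S_def P_def)
  then have inv_S: "matrix_inv S = P" and inv_P: "matrix_inv P = S"
    using matrix_inv_unique matrix_left_right_inverse by blast+
  have S: "conjugates_to_J0 J S"
    using unitary_frame_conjugates_to_J0[OF f] by (simp add: inv_P[unfolded P_def])
  have "S ** g_adjoint X ** matrix_inv S = transpose (S ** X ** matrix_inv S)"
    unfolding inv_S by (simp add: S_def g_adjoint_def matrix_transpose_mul symmetric
        matrix_mul_assoc matrix_inv_cancel[OF invertible_G])
  then show ?thesis
    using S X g_adjoint_commutes_J[OF X]
    by (simp add: detbar_eq_det_complex_block det_complex_block_transpose conjugate_commutes_J0)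
qed

lemma detbar_isometry:
  assumes u: "transpose u ** G ** u = G" "u ** J = J ** u"
  shows "cmod (detbar J u) = 1"
proof -
  obtain S where S: "conjugates_to_J0 J S"
    using ex_conjugates_to_J0 by blast
  have "g_adjoint u ** u = mat 1"
    by (simp add: g_adjoint_def matrix_mul_assoc[symmetric] u(1) matrix_inv_left[OF invertible_G],
        simp add: matrix_mul_assoc u(1) matrix_inv_left[OF invertible_G])
  then have "cnj (detbar J u) * detbar J u = 1"
    using detbar_mult[OF S g_adjoint_commutes_J[OF u(2)] u(2)] detbar_mat_1[OF S]
    by (simp add: detbar_g_adjoint[OF u(2)])
  then have "(cmod (detbar J u))\<^sup>2 = 1"
    by (simp add: complex_mod_mult_cnj[symmetric] mult.commute)
  then show ?thesis
    using norm_ge_zero[of "detbar J u"] by (auto simp: power2_eq_1_iff)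
qed

lemma detbar_eigenframe:
  assumes f: "unitary_frame f" and C: "C ** J = J ** C" and ev: "\<And>j. C *v f j = c j *\<^sub>R f j"
  shows "detbar J C = (\<Prod>j\<in>UNIV. complex_of_real (c j))"
proof -
  define P where "P = frame_matrix J f"
  have P: "invertible P" and S: "conjugates_to_J0 J (matrix_inv P)"
    using unitary_frame_conjugates_to_J0[OF f] by (simp_all add: P_def)
  define D :: "'n rmat" where
    "D = (\<chi> a b. if a = b then c (case a of Inl j \<Rightarrow> j | Inr j \<Rightarrow> j) else 0)"
  have "C *v (J *v f j) = J *v (C *v f j)" for j
    by (simp add: matrix_vector_mul_assoc C)
  then have CJf: "C *v (J *v f j) = c j *\<^sub>R (J *v f j)" for j
    by (simp add: ev matrix_vector_mult_scaleR)
  have "C ** P = P ** D"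
  proof (rule matrix_eq_columnwise)
    fix a
    have "column a (P ** D) = c (case a of Inl j \<Rightarrow> j | Inr j \<Rightarrow> j) *\<^sub>R column a P"
      unfolding D_def by (rule column_mult_diagonal)
    then show "column a (C ** P) = column a (P ** D)"
      by (cases a) (simp_all add: column_matrix_mult P_def column_frame_matrix CJf ev)
  qed
  then have "matrix_inv P ** C ** matrix_inv (matrix_inv P) = D"
    by (simp add: matrix_inv_matrix_inv[OF P] matrix_mul_assoc[symmetric])
      (simp add: matrix_mul_assoc matrix_inv_cancel[OF P])
  moreover have "complex_block D = (\<chi> i j. if i = j then complex_of_real (c i) else 0)"
    by (simp add: complex_block_def D_def vec_eq_iff)
  ultimately show ?thesis
    by (simp add: detbar_eq_det_complex_block[OF S C] det_diagonal)
qed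

end

section \<open>The matrix C_M\<close>

lemma C_of_scaleR: "C_of J (c *\<^sub>R X) = c *\<^sub>R C_of J X"
  by (simp add: C_of_def matrix_mult_distribs algebra_simps)

lemma C_of_uminus: "C_of J (- X) = - C_of J X"
  using C_of_scaleR[of J "-1" X] by simp

lemma C_of_commutes_J:
  assumes "J ** J = - mat 1"
  shows "C_of J M ** J = J ** C_of J M"
  by (simp add: C_of_def matrix_mult_distribs matrix_mul_assoc assms,
      simp add: matrix_mul_assoc[symmetric] assms matrix_mult_distribs algebra_simps)

lemma C_of_mult_commuting_left:
  assumes "u ** J = J ** u"
  shows "C_of J (u ** X) = u ** C_of J X"
  by (simp add: C_of_def matrix_mult_distribs matrix_mul_assoc assms[symmetric])

lemma C_of_mult_commuting_right:
  assumes "u ** J = J ** u"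
  shows "C_of J (X ** u) = C_of J X ** u"
  by (simp add: C_of_def matrix_mult_distribs matrix_mul_assoc[symmetric] assms)

lemma C_of_commuting:
  assumes "J ** J = - mat 1" "u ** J = J ** u"
  shows "C_of J u = u"
  by (simp add: C_of_def assms(2)[symmetric] matrix_mul_assoc[symmetric] assms(1)
      matrix_mult_neg scaleR_2[symmetric])

lemma C_of_conjugate_J:
  assumes "J ** J = - mat 1"
  shows "C_of J (J ** X ** J) = - C_of J X"
  by (simp add: C_of_def matrix_mul_assoc assms matrix_mult_neg matrix_neg_mult algebra_simps,
      simp add: matrix_mul_assoc[symmetric] assms matrix_neg_mult matrix_mult_neg)

section \<open>The matrix exponential\<close>

lemma bounded_linear_matrix_mult_left: "bounded_linear (\<lambda>X::real^'k^'n. (K::real^'n^'m) ** X)"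
  by (simp add: linear_conv_bounded_linear[symmetric])
    (rule linearI; simp add: matrix_add_ldistrib matrix_mult_scaleR)

lemma bounded_linear_matrix_vector_mult_left: "bounded_linear (\<lambda>X::real^'n^'m. X *v v)"
  by (simp add: linear_conv_bounded_linear[symmetric])
    (rule linearI; simp add: vec_eq_iff matrix_vector_mult_def sum.distrib[symmetric]
      distrib_right sum_distrib_left mult.assoc)

lemma bounded_linear_C_of: "bounded_linear (C_of J)"
  by (simp add: linear_conv_bounded_linear[symmetric])
    (rule linearI; simp add: C_of_def matrix_mult_distribs algebra_simps)

lemma summable_mexp: "summable (\<lambda>n. (1 / fact n) *\<^sub>R mpow (K::'n::finite rmat) n)"
proof -
  obtain C where C: "\<And>X::'n rmat. norm (K ** X) \<le> norm X * C" and "C \<ge> 0"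
    using bounded_linear.nonneg_bounded[OF bounded_linear_matrix_mult_left] by blast
  have bound: "norm (mpow K n) \<le> norm (mat 1 :: 'n rmat) * C ^ n" for n
  proof (induction n)
    case (Suc n)
    have "norm (mpow K (Suc n)) \<le> norm (mpow K n) * C"
      by (simp add: C)
    also have "\<dots> \<le> norm (mat 1 :: 'n rmat) * C ^ n * C"
      using \<open>C \<ge> 0\<close> Suc.IH by (intro mult_right_mono) auto
    finally show ?case
      by (simp add: mult_ac)
  qed simp
  show ?thesis
  proof (rule summable_comparison_test')
    show "summable (\<lambda>n. norm (mat 1 :: 'n rmat) * (C ^ n / fact n))"
      using exp_converges[of C] by (intro summable_mult) (simp add: sums_iff divide_inverse mult.commute)
    show "norm ((1 / fact n) *\<^sub>R mpow K n) \<le> norm (mat 1 :: 'n rmat) * (C ^ n / fact n)" for n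
      using bound[of n] by (simp add: divide_right_mono)
  qed
qed

lemma mpow_anticommute:
  assumes "J ** K = - (K ** J)"
  shows "J ** mpow K n = (-1) ^ n *\<^sub>R (mpow K n ** J)"
proof (induction n)
  case (Suc n)
  have "J ** mpow K (Suc n) = - (K ** (J ** mpow K n))"
    by (simp add: matrix_mul_assoc assms matrix_neg_mult)
  then show ?case
    by (simp add: Suc.IH matrix_mult_scaleR matrix_mul_assoc)
qed simp

lemma mpow_double: "mpow K (2 * m) = mpow (K ** K) m"
  by (induction m) (simp_all add: matrix_mul_assoc)

lemma mpow_eigenvector:
  assumes "A *v v = mu *\<^sub>R v"
  shows "mpow A m *v v = mu ^ m *\<^sub>R v"
  by (induction m) (simp_all flip: matrix_vector_mul_assoc add: matrix_vector_mult_scaleR assms)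

lemma C_of_mpow:
  assumes "J ** K = - (K ** J)" "J ** J = - mat 1"
  shows "C_of J (mpow K n) = (if even n then mpow K n else 0)"
proof -
  have "J ** mpow K n ** J = - ((-1) ^ n *\<^sub>R mpow K n)"
    by (simp add: mpow_anticommute[OF assms(1)] matrix_scaleR_mult matrix_mul_assoc[symmetric]
        assms(2) matrix_mult_neg)
  then show ?thesis
    by (simp add: C_of_def scaleR_2[symmetric])
qed

definition cosh_sqrt_coeff :: "real \<Rightarrow> nat \<Rightarrow> real" where
  "cosh_sqrt_coeff mu n = (if even n then mu ^ (n div 2) / fact n else 0)"

definition cosh_sqrt :: "real \<Rightarrow> real" where
  "cosh_sqrt mu = (\<Sum>n. cosh_sqrt_coeff mu n)"

lemma summable_cosh_sqrt_coeff: "summable (cosh_sqrt_coeff mu)"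
proof (rule summable_comparison_test')
  let ?c = "max 1 \<bar>mu\<bar>"
  show "summable (\<lambda>n. ?c ^ n / fact n)"
    using exp_converges[of ?c] by (simp add: sums_iff divide_inverse mult.commute)
  show "norm (cosh_sqrt_coeff mu n) \<le> ?c ^ n / fact n" for n
  proof (cases "even n")
    case True
    then obtain m where n: "n = 2 * m"
      by auto
    have "\<bar>mu\<bar> ^ m \<le> ?c ^ m"
      by (intro power_mono) auto
    also have "\<dots> \<le> ?c ^ n"
      unfolding n by (intro power_increasing) auto
    finally show ?thesis
      using True by (simp add: cosh_sqrt_coeff_def n power_abs divide_right_mono)
  qed (simp add: cosh_sqrt_coeff_def)
qed

lemma cosh_sqrt_pos:
  assumes "mu \<ge> 0"
  shows "cosh_sqrt mu > 0"
proof -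
  have "(\<Sum>n<1. cosh_sqrt_coeff mu n) \<le> cosh_sqrt mu"
    unfolding cosh_sqrt_def
    by (rule sum_le_suminf[OF summable_cosh_sqrt_coeff]) (auto simp: cosh_sqrt_coeff_def assms)
  then show ?thesis
    by (simp add: cosh_sqrt_coeff_def)
qed

lemma cosh_sqrt_eq_cos:
  assumes "mu \<le> 0"
  shows "cosh_sqrt mu = cos (sqrt (- mu))"
proof -
  have "cosh_sqrt_coeff mu n = cos_coeff n *\<^sub>R sqrt (- mu) ^ n" for n
  proof (cases "even n")
    case True
    then obtain m where n: "n = 2 * m"
      by auto
    have "sqrt (- mu) ^ n = (- mu) ^ m"
      using assms by (simp add: n power_mult)
    then show ?thesis
      using True by (simp add: cosh_sqrt_coeff_def cos_coeff_def n power_minus')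
  qed (simp add: cosh_sqrt_coeff_def cos_coeff_def)
  then show ?thesis
    using cos_converges[of "sqrt (- mu)"] by (simp add: cosh_sqrt_def sums_iff)
qed

lemma C_of_mexp_eigenvector:
  assumes JK: "J ** K = - (K ** J)" and JJ: "J ** J = - mat 1"
    and ev: "(K ** K) *v v = mu *\<^sub>R v"
  shows "C_of J (mexp K) *v v = cosh_sqrt mu *\<^sub>R v"
proof -
  define T where "T n = (if even n then (1 / fact n) *\<^sub>R mpow K n else 0)" for n
  have "C_of J ((1 / fact n) *\<^sub>R mpow K n) = T n" for n
    by (simp add: T_def C_of_scaleR C_of_mpow[OF JK JJ])
  then have C_mexp: "C_of J (mexp K) = suminf T" and "summable T"
    using bounded_linear.suminf[OF bounded_linear_C_of summable_mexp, of J K]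
      bounded_linear.summable[OF bounded_linear_C_of summable_mexp, of J K]
    by (simp_all add: mexp_def)
  have T_apply: "T n *v v = cosh_sqrt_coeff mu n *\<^sub>R v" for n
  proof (cases "even n")
    case True
    then obtain m where n: "n = 2 * m"
      by auto
    show ?thesis
      using True by (simp add: T_def cosh_sqrt_coeff_def n mpow_double mpow_eigenvector[OF ev]
          scaleR_matrix_vector_assoc[symmetric])
  qed (simp add: T_def cosh_sqrt_coeff_def)
  have "C_of J (mexp K) *v v = (\<Sum>n. T n *v v)"
    using C_mexp bounded_linear.suminf[OF bounded_linear_matrix_vector_mult_left \<open>summable T\<close>]
    by simp
  then show ?thesis
    by (simp add: T_apply cosh_sqrt_def suminf_scaleR_left[OF summable_cosh_sqrt_coeff])
qed

section \<open>Bosonic and fermionic structures\<close>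

lemma Omega_squared: "(Omega :: 'n::finite rmat) ** Omega = - mat 1"
  using J0_squared by (simp add: J0_def)

lemma transpose_Omega: "transpose (Omega :: 'n::finite rmat) = - Omega"
  using transpose_J0 by (simp add: J0_def)

lemma symplectic_right_inverse:
  fixes M :: "'n::finite rmat"
  assumes "M ** Omega ** transpose M = Omega"
  shows "M ** (- (Omega ** transpose M ** Omega)) = mat 1"
  by (simp add: matrix_mult_neg matrix_mul_assoc assms Omega_squared)

lemma symplectic_matrix_inv:
  fixes M :: "'n::finite rmat"
  assumes "M ** Omega ** transpose M = Omega"
  shows "matrix_inv M = - (Omega ** transpose M ** Omega)"
  by (rule matrix_inv_unique[OF symplectic_right_inverse[OF assms]])

lemma symplectic_transpose:
  fixes M :: "'n::finite rmat"
  assumes "M ** Omega ** transpose M = Omega"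
  shows "transpose M ** Omega ** M = Omega"
proof -
  have "- (Omega ** transpose M ** Omega) ** M = mat 1"
    using symplectic_right_inverse[OF assms] matrix_left_right_inverse by blast
  then have "Omega ** transpose M ** Omega ** M = - mat 1"
    by (simp add: matrix_neg_mult minus_equation_iff)
  then have "Omega ** (Omega ** transpose M ** Omega ** M) = - Omega"
    by (simp add: matrix_mult_neg)
  then show ?thesis
    by (simp add: matrix_mul_assoc Omega_squared matrix_neg_mult)
qed

lemma positive_congruence:
  fixes Y Q :: "real^'n^'n"
  assumes Y: "\<And>x. x \<noteq> 0 \<Longrightarrow> x \<bullet> (Y *v x) > 0" and Q: "invertible Q" and x: "x \<noteq> 0"
  shows "x \<bullet> ((transpose Q ** Y ** Q) *v x) > 0"
proof -
  have "Q *v x \<noteq> 0"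
    using x inj_matrix_vector_mult[OF Q] by (metis matrix_vector_mult_0_right injD)
  then have "(Q *v x) \<bullet> (Y *v (Q *v x)) > 0"
    by (rule Y)
  then show ?thesis
    by (simp only: matrix_vector_mult_inner matrix_vector_mul_assoc matrix_mul_assoc)
qed

definition metric_of :: "bool \<Rightarrow> 'n::finite rmat \<Rightarrow> 'n rmat" where
  "metric_of bos J = (if bos then - (Omega ** J) else mat 1)"

lemma hermitian_metric_symplectic:
  fixes J :: "'n::finite rmat"
  assumes JJ: "J ** J = - mat 1" and JO: "J ** Omega ** transpose J = Omega"
    and pos: "pos_def (- (J ** Omega))"
  shows "hermitian_metric (- (Omega ** J)) J"
proof
  have JtOJ: "transpose J ** Omega ** J = Omega"
    by (rule symplectic_transpose[OF JO])
  have "transpose J ** Omega = transpose J ** Omega ** J ** (- J)"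
    by (simp add: matrix_mul_assoc[symmetric] matrix_mult_neg JJ)
  then have JtO: "transpose J ** Omega = - (Omega ** J)"
    by (simp add: JtOJ matrix_mult_neg)
  show "transpose (- (Omega ** J)) = - (Omega ** J)"
    by (simp add: transpose_uminus matrix_transpose_mul transpose_Omega matrix_mult_neg JtO)
  have congruence: "- (Omega ** J) = transpose Omega ** (- (J ** Omega)) ** Omega"
    by (simp add: transpose_Omega matrix_neg_mult matrix_mult_neg matrix_mul_assoc[symmetric]
        Omega_squared)
  have "(Omega :: 'n rmat) ** (- Omega) = mat 1"
    by (simp add: matrix_mult_neg Omega_squared)
  then have "invertible (Omega :: 'n rmat)"
    using invertible_right_inverse by blast
  then show "x \<bullet> (- (Omega ** J) *v x) > 0" if "x \<noteq> 0" for x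
    unfolding congruence using pos that by (intro positive_congruence) (auto simp: pos_def_def)
  show "J ** J = - mat 1"
    by (rule JJ)
  show "transpose J ** (- (Omega ** J)) ** J = - (Omega ** J)"
    by (simp add: matrix_mult_neg matrix_neg_mult matrix_mul_assoc JtOJ)
qed

lemma hermitian_metric_of:
  fixes J :: "'n::finite rmat"
  assumes J: "cplx_str bos J"
  shows "hermitian_metric (metric_of bos J) J"
proof (cases bos)
  case True
  then show ?thesis
    using J by (simp add: cplx_str_def metric_of_def hermitian_metric_symplectic)
next
  case False
  then show ?thesis
    using J by unfold_locales (auto simp: metric_of_def cplx_str_def inner_gt_zero_iff)
qed

lemma U_N_isometry:
  assumes u: "u \<in> U_N bos J"
  shows "transpose u ** metric_of bos J ** u = metric_of bos J"
proof (cases bos)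
  case True
  have uOu: "transpose u ** Omega ** u = Omega"
    using u True by (intro symplectic_transpose) (simp add: U_N_def in_G_def)
  have Ju: "J ** u = u ** J"
    using u by (simp add: U_N_def)
  have "transpose u ** (Omega ** J) ** u = transpose u ** Omega ** (J ** u)"
    by (simp only: matrix_mul_assoc)
  also have "\<dots> = Omega ** J"
    by (simp add: Ju matrix_mul_assoc uOu)
  finally have "transpose u ** (Omega ** J) ** u = Omega ** J" .
  then show ?thesis
    using True by (simp add: metric_of_def matrix_mult_neg matrix_neg_mult)
next
  case False
  then show ?thesis
    using u by (simp add: U_N_def in_G_def metric_of_def)
qed

lemma u_perp_anticommutes: "K \<in> u_perp bos J \<Longrightarrow> J ** K = - (K ** J)"
  by (simp add: u_perp_def)

lemma u_perp_self_adjoint: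
  assumes J: "cplx_str bos J" and K: "K \<in> u_perp bos J" and "bos"
  shows "transpose K ** metric_of bos J = metric_of bos J ** K"
proof -
  have "Omega ** transpose K = - (K ** Omega)"
    using K \<open>bos\<close> by (simp add: u_perp_def in_g_def eq_neg_iff_add_eq_0 add.commute)
  then have "transpose K = - (Omega ** (- (K ** Omega)))"
    by (simp add: matrix_mul_assoc Omega_squared matrix_neg_mult flip: \<open>Omega ** transpose K = _\<close>)
  then have "transpose K = Omega ** K ** Omega"
    by (simp add: matrix_mult_neg matrix_mul_assoc)
  then have "transpose K ** metric_of bos J = - (Omega ** K ** (Omega ** Omega) ** J)"
    using \<open>bos\<close> by (simp add: metric_of_def matrix_mult_neg matrix_mul_assoc)
  also have "\<dots> = Omega ** K ** J"
    by (simp add: Omega_squared matrix_mult_neg matrix_neg_mult)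
  also have "\<dots> = metric_of bos J ** K"
    using \<open>bos\<close> u_perp_anticommutes[OF K]
    by (simp add: metric_of_def matrix_neg_mult matrix_mul_assoc[symmetric] matrix_mult_neg)
  finally show ?thesis .
qed

lemma u_perp_antisymmetric: "\<not> bos \<Longrightarrow> K \<in> u_perp bos J \<Longrightarrow> transpose K = - K"
  by (simp add: u_perp_def in_g_def)

lemma u_perp_square_self_adjoint:
  assumes J: "cplx_str bos J" and K: "K \<in> u_perp bos J"
  shows "transpose (K ** K) ** metric_of bos J = metric_of bos J ** (K ** K)"
proof (cases bos)
  case True
  then show ?thesis
    using u_perp_self_adjoint[OF J K]
    by (simp add: matrix_transpose_mul matrix_mul_assoc[symmetric], simp add: matrix_mul_assoc)
next
  case False
  then show ?thesis
    using u_perp_antisymmetric[OF False K]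
    by (simp add: metric_of_def matrix_transpose_mul matrix_neg_mult matrix_mult_neg)
qed

lemma u_perp_square_commutes:
  assumes "K \<in> u_perp bos J"
  shows "(K ** K) ** J = J ** (K ** K)"
proof -
  have JK: "J ** K = - (K ** J)"
    by (rule u_perp_anticommutes[OF assms])
  have KJ: "K ** J = - (J ** K)"
    by (simp add: JK)
  have "(K ** K) ** J = - (K ** (J ** K))"
    by (simp only: matrix_mul_assoc[symmetric] KJ matrix_mult_neg)
  also have "\<dots> = J ** (K ** K)"
    by (simp only: matrix_mul_assoc KJ matrix_neg_mult minus_minus)
  finally show ?thesis .
qed

lemma C_of_matrix_inv:
  fixes J :: "'n::finite rmat"
  assumes J: "cplx_str bos J" and M: "in_G bos M"
  shows "C_of J (matrix_inv M) = hermitian_metric.g_adjoint (metric_of bos J) (C_of J M)"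
proof -
  interpret hermitian_metric "metric_of bos J" J
    by (rule hermitian_metric_of[OF J])
  have "C_of J (matrix_inv M) = C_of J (g_adjoint M)"
  proof (cases bos)
    case True
    have MO: "M ** Omega ** transpose M = Omega"
      using M True by (simp add: in_G_def)
    have "metric_of bos J ** (- (J ** Omega)) = mat 1"
      using True by (simp add: metric_of_def matrix_mult_neg matrix_neg_mult matrix_mul_assoc,
          simp add: matrix_mul_assoc[symmetric] J_squared matrix_neg_mult matrix_mult_neg Omega_squared)
    then have "matrix_inv (metric_of bos J) = - (J ** Omega)"
      by (rule matrix_inv_unique)
    then have "g_adjoint M = J ** (Omega ** transpose M ** Omega) ** J"
      using True unfolding g_adjoint_def
      by (simp add: metric_of_def matrix_neg_mult matrix_mult_neg matrix_mul_assoc)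
    also have "\<dots> = J ** (- matrix_inv M) ** J"
      by (simp add: symplectic_matrix_inv[OF MO])
    finally show ?thesis
      by (simp add: C_of_conjugate_J[OF J_squared] C_of_uminus)
  next
    case False
    then have "transpose M ** M = mat 1"
      using M by (simp add: in_G_def)
    then have "matrix_inv M = transpose M"
      using matrix_inv_unique matrix_left_right_inverse by blast
    moreover have "matrix_inv (mat 1 :: 'n rmat) = mat 1"
      by (rule matrix_inv_unique) simp
    ultimately show ?thesis
      using False unfolding g_adjoint_def by (simp add: metric_of_def)
  qed
  then show ?thesis
    by (simp add: C_of_g_adjoint)
qed

lemma is_ceigenvalue_sqrt:
  fixes K :: "'n::finite rmat"
  assumes ev: "(K ** K) *v x = mu *\<^sub>R x" and "x \<noteq> 0" "mu < 0"
  shows "is_ceigenvalue K (\<i> * complex_of_real (sqrt (- mu)))"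
proof -
  define w where "w = sqrt (- mu)"
  have "w > 0" "w * w = - mu"
    using \<open>mu < 0\<close> by (simp_all add: w_def)
  define v where "v = (\<chi> a. complex_of_real ((K *v x) $ a) + \<i> * complex_of_real (w * x $ a))"
  have "(K *v (K *v x)) $ a = mu * x $ a" for a
    using ev by (simp add: matrix_vector_mul_assoc)
  then have KKx: "(\<Sum>b\<in>UNIV. K $ a $ b * (K *v x) $ b) = mu * x $ a" for a
    by (simp only: matrix_vector_mult_def vec_lambda_beta)
  have "(cmat K *v v) $ a = ((\<i> * complex_of_real w) *s v) $ a" for a
  proof -
    have "(cmat K *v v) $ a
        = complex_of_real (mu * x $ a) + \<i> * complex_of_real (w * (K *v x) $ a)"
      by (simp add: cmat_def v_def matrix_vector_mult_def complex_eq_iff Re_sum Im_sum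
          KKx[symmetric] sum_distrib_left mult_ac)
    then show ?thesis
      using \<open>w * w = - mu\<close>
      by (simp add: v_def complex_eq_iff algebra_simps) (simp add: mult.assoc[symmetric])
  qed
  moreover have "v \<noteq> 0"
  proof
    assume "v = 0"
    obtain a where "x $ a \<noteq> 0"
      using \<open>x \<noteq> 0\<close> by (auto simp: vec_eq_iff)
    then have "Im (v $ a) \<noteq> 0"
      using \<open>w > 0\<close> by (simp add: v_def)
    then show False
      using \<open>v = 0\<close> by simp
  qed
  ultimately show ?thesis
    unfolding is_ceigenvalue_def w_def[symmetric] by (auto simp: vec_eq_iff)
qed

lemma cosh_sqrt_u_perp_eigenvalue_pos:
  assumes J: "cplx_str bos J" and K: "K \<in> u_perp bos J"
    and small: "\<not> bos \<longrightarrow> (\<forall>l. is_ceigenvalue K l \<longrightarrow> cmod l < pi / 2)"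
    and ev: "(K ** K) *v x = mu *\<^sub>R x" and "x \<noteq> 0"
  shows "cosh_sqrt mu > 0"
proof (cases bos)
  case True
  interpret hermitian_metric "metric_of bos J" J
    by (rule hermitian_metric_of[OF J])
  have "mu * g x x = g (K *v x) (K *v x)"
    using g_self_adjoint[OF u_perp_self_adjoint[OF J K True], of x "K *v x"] ev
    by (simp add: matrix_vector_mul_assoc g_scaleR_right)
  then have "mu * g x x \<ge> 0"
    using g_pos[of "K *v x"] by (cases "K *v x = 0") auto
  then show ?thesis
    using g_pos[OF \<open>x \<noteq> 0\<close>] by (intro cosh_sqrt_pos) (simp add: zero_le_mult_iff)
next
  case False
  have "mu * (x \<bullet> x) = x \<bullet> (K *v (K *v x))"
    by (simp add: matrix_vector_mul_assoc ev)
  also have "\<dots> = - ((K *v x) \<bullet> (K *v x))"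
    using inner_matrix_vector_mult[of x K "K *v x"]
    by (simp add: u_perp_antisymmetric[OF \<open>\<not> bos\<close> K] matrix_vector_mult_uminus)
  finally have "mu * (x \<bullet> x) \<le> 0"
    by simp
  moreover have "x \<bullet> x > 0"
    using \<open>x \<noteq> 0\<close> by simp
  ultimately have "mu \<le> 0"
    by (simp add: mult_le_0_iff)
  show ?thesis
  proof (cases "mu = 0")
    case True
    then show ?thesis
      using cosh_sqrt_eq_cos[of 0] by simp
  next
    case False
    then have "mu < 0"
      using \<open>mu \<le> 0\<close> by simp
    then have "cmod (\<i> * complex_of_real (sqrt (- mu))) < pi / 2"
      using small \<open>\<not> bos\<close> is_ceigenvalue_sqrt[OF ev \<open>x \<noteq> 0\<close>] by blast
    then have "sqrt (- mu) < pi / 2"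
      by (simp add: norm_mult)
    moreover have "- (pi / 2) < sqrt (- mu)"
      using pi_gt_zero real_sqrt_ge_zero[of "- mu"] \<open>mu < 0\<close> by linarith
    ultimately have "cos (sqrt (- mu)) > 0"
      by (intro cos_gt_zero_pi)
    then show ?thesis
      using cosh_sqrt_eq_cos[OF \<open>mu \<le> 0\<close>] by simp
  qed
qed

section \<open>The circle function\<close>

lemma detbar_C_of_mexp_positive:
  assumes J: "cplx_str bos J" and K: "K \<in> u_perp bos J"
    and small: "\<not> bos \<longrightarrow> (\<forall>l. is_ceigenvalue K l \<longrightarrow> cmod l < pi / 2)"
  obtains r where "r > 0" "detbar J (C_of J (mexp K)) = complex_of_real r"
proof -
  interpret hermitian_metric "metric_of bos J" J
    by (rule hermitian_metric_of[OF J])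
  obtain f where f: "unitary_frame f" and "\<And>j. \<exists>mu. (K ** K) *v f j = mu *\<^sub>R f j"
    using ex_unitary_eigenframe[OF u_perp_square_self_adjoint[OF J K] u_perp_square_commutes[OF K]]
    by blast
  then obtain mu where mu: "\<And>j. (K ** K) *v f j = mu j *\<^sub>R f j"
    by metis
  have "g (f j) (f j) = 1" for j
    using f by (simp add: unitary_frame_def)
  then have "f j \<noteq> 0" for j
    by (metis g_zero_left zero_neq_one)
  have "detbar J (C_of J (mexp K)) = (\<Prod>j\<in>UNIV. complex_of_real (cosh_sqrt (mu j)))"
    using C_of_mexp_eigenvector[OF u_perp_anticommutes[OF K] J_squared mu]
    by (rule detbar_eigenframe[OF f C_of_commutes_J[OF J_squared]])
  moreover have "(\<Prod>j\<in>UNIV. cosh_sqrt (mu j)) > 0"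
    using cosh_sqrt_u_perp_eigenvalue_pos[OF J K small mu \<open>f _ \<noteq> 0\<close>] by (simp add: prod_pos)
  ultimately show ?thesis
    using that by simp
qed

lemma phi_eq_sgn: "phi J M = sgn (detbar J (C_of J M))"
  by (simp add: phi_def sgn_div_norm divide_inverse scaleR_conv_of_real mult.commute)

lemma phi_cartan:
  assumes J: "cplx_str bos J" and K: "K \<in> u_perp bos J" and u: "u \<in> U_N bos J"
    and small: "\<not> bos \<longrightarrow> (\<forall>l. is_ceigenvalue K l \<longrightarrow> cmod l < pi / 2)"
  shows "phi J (mexp K ** u) = detbar J u"
proof -
  interpret hermitian_metric "metric_of bos J" J
    by (rule hermitian_metric_of[OF J])
  obtain S where S: "conjugates_to_J0 J S"
    using ex_conjugates_to_J0 by blast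
  have uJ: "u ** J = J ** u"
    using u by (simp add: U_N_def)
  obtain r where "r > 0" and r: "detbar J (C_of J (mexp K)) = complex_of_real r"
    by (rule detbar_C_of_mexp_positive[OF J K small])
  have "phi J (mexp K ** u) = sgn (detbar J (C_of J (mexp K)) * detbar J u)"
    by (simp add: phi_eq_sgn C_of_mult_commuting_right[OF uJ]
        detbar_mult[OF S C_of_commutes_J[OF J_squared] uJ])
  also have "\<dots> = sgn (detbar J u)"
    using \<open>r > 0\<close> by (simp add: r sgn_mult sgn_of_real)
  also have "\<dots> = detbar J u"
    using detbar_isometry[OF U_N_isometry[OF u] uJ] by (simp add: sgn_div_norm)
  finally show ?thesis .
qed

lemma phi_mat_1:
  assumes J: "cplx_str bos J"
  shows "phi J (mat 1) = 1"
proof -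
  interpret hermitian_metric "metric_of bos J" J
    by (rule hermitian_metric_of[OF J])
  obtain S where S: "conjugates_to_J0 J S"
    using ex_conjugates_to_J0 by blast
  show ?thesis
    by (simp add: phi_eq_sgn C_of_commuting[OF J_squared] detbar_mat_1[OF S])
qed

lemma phi_unitary_mult:
  assumes J: "cplx_str bos J" and u1: "u1 \<in> U_N bos J" and u2: "u2 \<in> U_N bos J"
  shows "phi J (u1 ** M ** u2) = phi J u1 * phi J M * phi J u2"
proof -
  interpret hermitian_metric "metric_of bos J" J
    by (rule hermitian_metric_of[OF J])
  obtain S where S: "conjugates_to_J0 J S"
    using ex_conjugates_to_J0 by blast
  have u1J: "u1 ** J = J ** u1" and u2J: "u2 ** J = J ** u2"
    using u1 u2 by (simp_all add: U_N_def)
  have CJ: "C_of J M ** J = J ** C_of J M"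
    by (rule C_of_commutes_J[OF J_squared])
  have "u1 ** C_of J M ** J = J ** (u1 ** C_of J M)"
    by (simp add: matrix_mul_assoc[symmetric] CJ, simp add: matrix_mul_assoc u1J)
  then have "detbar J (C_of J (u1 ** M ** u2)) = detbar J u1 * detbar J (C_of J M) * detbar J u2"
    by (simp add: C_of_mult_commuting_right[OF u2J] C_of_mult_commuting_left[OF u1J]
        detbar_mult[OF S] u1J u2J CJ)
  then show ?thesis
    by (simp add: phi_eq_sgn sgn_mult C_of_commuting[OF J_squared] u1J u2J)
qed

lemma phi_matrix_inv:
  assumes J: "cplx_str bos J" and M: "in_G bos M"
  shows "phi J (matrix_inv M) = cnj (phi J M)"
proof -
  interpret hermitian_metric "metric_of bos J" J
    by (rule hermitian_metric_of[OF J])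
  have "detbar J (C_of J (matrix_inv M)) = cnj (detbar J (C_of J M))"
    unfolding C_of_matrix_inv[OF J M] by (rule detbar_g_adjoint[OF C_of_commutes_J[OF J_squared]])
  then show ?thesis
    by (simp add: phi_def)
qed

theorem lemma7:
  fixes bos :: bool and J :: "'n::finite rmat"
  assumes J: "cplx_str bos J"
  shows
    "(\<forall>M K u. in_G bos M \<and> phi_defined bos J M \<and>
        K \<in> u_perp bos J \<and> u \<in> U_N bos J \<and> M = mexp K ** u \<and>
        (\<not> bos \<longrightarrow> (\<forall>l. is_ceigenvalue K l \<longrightarrow> cmod l < pi / 2))
        \<longrightarrow> phi J M = detbar J u)
   \<and> phi J (mat 1) = 1
   \<and> (\<forall>M u1 u2. in_G bos M \<and> phi_defined bos J M \<and> u1 \<in> U_N bos J \<and> u2 \<in> U_N bos J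
        \<longrightarrow> phi J (u1 ** M ** u2) = phi J u1 * phi J M * phi J u2)
   \<and> (\<forall>M. in_G bos M \<and> phi_defined bos J M
        \<longrightarrow> phi J (matrix_inv M) = cnj (phi J M))"
  using phi_cartan[OF J] phi_mat_1[OF J] phi_unitary_mult[OF J] phi_matrix_inv[OF J] by blast

end
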